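(* Let $(G=(V,E),\sigma)$ be a properly $n$-colored graph containing a hub-vertex $x$. If $F$ is an optimal RBMG deletion set (resp. optimal RBMG edit set) for $(G,\sigma)$, then $F$ contains no pair of the form $xv$ with $v\in V$.
   Context: All graphs are finite, simple and undirected; $G\setminus F=(V,E\setminus F)$, $G\triangle F=(V,E\triangle F)$. A vertex coloring is a surjective map $\sigma:V\to S$; properly $n$-colored means adjacent vertices get distinct colors and $|S|=n$. A hub-vertex of $G$ is a vertex adjacent to all other vertices. A phylogenetic tree $T$ on $L$ is a rooted tree with leaf set $L$ whose inner vertices other than the root have degree at least three; $u\preceq_T v$ means $v$ lies on the root-to-$u$ path; $\mathrm{lca}_T$ is last common ancestor. For surjective $\sigma:L\to S$, $y$ is a best match of $x$ if $\sigma(x)\neq\sigma(y)$ and $\mathrm{lca}_T(x,y)\preceq_T\mathrm{lca}_T(x,y')$ for all $y'$ with $\sigma(y')=\sigma(y)$; $G(T,\sigma)$ is the graph on $L$ whose edges are the reciprocal best match pairs. A properly colored $(G,\sigma)$ is an RBMG if $G(T,\sigma)=(G,\sigma)$ for some $(T,\sigma)$; an $n$-RBMG if exactly $n$ colors are used. For a properly $n$-colored $(G,\sigma)$, $F\subseteq E$ is an (RBMG) deletion set if $(G\setminus F,\sigma)$ is an $n$-RBMG, and $F\subseteq\binom{V}{2}$ is an edit set if $(G\triangle F,\sigma)$ is an $n$-RBMG; such a set is optimal if it has minimum cardinality among all deletion (resp. edit) sets. *)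

theory Defs
  imports Main
begin

definition all_pairs :: "'a set \<Rightarrow> 'a set set" where
  "all_pairs V = {e. \<exists>u v. e = {u, v} \<and> u \<noteq> v \<and> u \<in> V \<and> v \<in> V}"

definition simple_graph :: "'a set \<Rightarrow> 'a set set \<Rightarrow> bool" where
  "simple_graph V E \<longleftrightarrow> finite V \<and> E \<subseteq> all_pairs V"

text \<open>sigma restricted to V is a surjective map onto its image sigma ` V (the color set S).\<close>
definition properly_colored :: "'a set \<Rightarrow> 'a set set \<Rightarrow> ('a \<Rightarrow> 'c) \<Rightarrow> bool" where
  "properly_colored V E \<sigma> \<longleftrightarrow> (\<forall>u v. {u, v} \<in> E \<longrightarrow> \<sigma> u \<noteq> \<sigma> v)"

definition properly_n_colored :: "'a set \<Rightarrow> 'a set set \<Rightarrow> ('a \<Rightarrow> 'c) \<Rightarrow> nat \<Rightarrow> bool" where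
  "properly_n_colored V E \<sigma> n \<longleftrightarrow> simple_graph V E \<and> properly_colored V E \<sigma> \<and> card (\<sigma> ` V) = n"

definition hub_vertex :: "'a set \<Rightarrow> 'a set set \<Rightarrow> 'a \<Rightarrow> bool" where
  "hub_vertex V E x \<longleftrightarrow> x \<in> V \<and> (\<forall>v \<in> V - {x}. {x, v} \<in> E)"

text \<open>A finite rooted tree is given by its vertex set W and its ancestor order
  (le u v means u \<preceq>_T v, i.e. v lies on the path from the root to u).\<close>

definition tree_root :: "'b set \<Rightarrow> ('b \<Rightarrow> 'b \<Rightarrow> bool) \<Rightarrow> 'b" where
  "tree_root W le = (THE r. r \<in> W \<and> (\<forall>u \<in> W. le u r))"

definition tree_children :: "'b set \<Rightarrow> ('b \<Rightarrow> 'b \<Rightarrow> bool) \<Rightarrow> 'b \<Rightarrow> 'b set" where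
  "tree_children W le v = {u \<in> W. u \<noteq> v \<and> le u v \<and> (\<forall>w \<in> W. le u w \<and> le w v \<longrightarrow> w = u \<or> w = v)}"

definition rooted_tree :: "'b set \<Rightarrow> ('b \<Rightarrow> 'b \<Rightarrow> bool) \<Rightarrow> bool" where
  "rooted_tree W le \<longleftrightarrow> finite W \<and>
     (\<forall>u \<in> W. le u u) \<and>
     (\<forall>u \<in> W. \<forall>v \<in> W. le u v \<and> le v u \<longrightarrow> u = v) \<and>
     (\<forall>u \<in> W. \<forall>v \<in> W. \<forall>w \<in> W. le u v \<and> le v w \<longrightarrow> le u w) \<and>
     (\<forall>u v. le u v \<longrightarrow> u \<in> W \<and> v \<in> W) \<and>
     (\<exists>r \<in> W. \<forall>u \<in> W. le u r) \<and>
     (\<forall>u \<in> W. \<forall>v \<in> W. \<forall>w \<in> W. le u v \<and> le u w \<longrightarrow> le v w \<or> le w v)"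

definition tree_leaves :: "'b set \<Rightarrow> ('b \<Rightarrow> 'b \<Rightarrow> bool) \<Rightarrow> 'b set" where
  "tree_leaves W le = {u \<in> W. \<forall>w \<in> W. le w u \<longrightarrow> w = u}"

text \<open>Phylogenetic tree on leaf set L: inner vertices other than the root have degree
  at least three, i.e. at least two children (plus their parent).\<close>
definition phylo_tree :: "'b set \<Rightarrow> 'b set \<Rightarrow> ('b \<Rightarrow> 'b \<Rightarrow> bool) \<Rightarrow> bool" where
  "phylo_tree L W le \<longleftrightarrow> rooted_tree W le \<and> tree_leaves W le = L \<and>
     (\<forall>v \<in> W - L. v \<noteq> tree_root W le \<longrightarrow> card (tree_children W le v) \<ge> 2)"

definition lca :: "'b set \<Rightarrow> ('b \<Rightarrow> 'b \<Rightarrow> bool) \<Rightarrow> 'b \<Rightarrow> 'b \<Rightarrow> 'b" where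
  "lca W le x y = (THE z. z \<in> W \<and> le x z \<and> le y z \<and> (\<forall>w \<in> W. le x w \<and> le y w \<longrightarrow> le z w))"

definition best_match :: "'b set \<Rightarrow> 'b set \<Rightarrow> ('b \<Rightarrow> 'b \<Rightarrow> bool) \<Rightarrow> ('b \<Rightarrow> 'c) \<Rightarrow> 'b \<Rightarrow> 'b \<Rightarrow> bool" where
  "best_match L W le \<sigma> x y \<longleftrightarrow> x \<in> L \<and> y \<in> L \<and> \<sigma> x \<noteq> \<sigma> y \<and>
     (\<forall>y' \<in> L. \<sigma> y' = \<sigma> y \<longrightarrow> le (lca W le x y) (lca W le x y'))"

definition rbm_edges :: "'b set \<Rightarrow> 'b set \<Rightarrow> ('b \<Rightarrow> 'b \<Rightarrow> bool) \<Rightarrow> ('b \<Rightarrow> 'c) \<Rightarrow> 'b set set" where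
  "rbm_edges L W le \<sigma> = {{x, y} | x y. best_match L W le \<sigma> x y \<and> best_match L W le \<sigma> y x}"

text \<open>Trees are finite; w.l.o.g. their vertex type is 'a + nat (leaves Inl v, inner vertices Inr k).\<close>
definition is_RBMG :: "'a set \<Rightarrow> 'a set set \<Rightarrow> ('a \<Rightarrow> 'c) \<Rightarrow> bool" where
  "is_RBMG V E \<sigma> \<longleftrightarrow> simple_graph V E \<and> properly_colored V E \<sigma> \<and>
     (\<exists>(W :: ('a + nat) set) le. phylo_tree (Inl ` V) W le \<and>
        rbm_edges (Inl ` V) W le (\<sigma> \<circ> projl) = (\<lambda>e. Inl ` e) ` E)"

definition is_n_RBMG :: "'a set \<Rightarrow> 'a set set \<Rightarrow> ('a \<Rightarrow> 'c) \<Rightarrow> nat \<Rightarrow> bool" where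
  "is_n_RBMG V E \<sigma> n \<longleftrightarrow> is_RBMG V E \<sigma> \<and> card (\<sigma> ` V) = n"

definition deletion_set :: "'a set \<Rightarrow> 'a set set \<Rightarrow> ('a \<Rightarrow> 'c) \<Rightarrow> nat \<Rightarrow> 'a set set \<Rightarrow> bool" where
  "deletion_set V E \<sigma> n F \<longleftrightarrow> F \<subseteq> E \<and> is_n_RBMG V (E - F) \<sigma> n"

definition edit_set :: "'a set \<Rightarrow> 'a set set \<Rightarrow> ('a \<Rightarrow> 'c) \<Rightarrow> nat \<Rightarrow> 'a set set \<Rightarrow> bool" where
  "edit_set V E \<sigma> n F \<longleftrightarrow> F \<subseteq> all_pairs V \<and> is_n_RBMG V ((E - F) \<union> (F - E)) \<sigma> n"

definition optimal_deletion_set :: "'a set \<Rightarrow> 'a set set \<Rightarrow> ('a \<Rightarrow> 'c) \<Rightarrow> nat \<Rightarrow> 'a set set \<Rightarrow> bool" where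
  "optimal_deletion_set V E \<sigma> n F \<longleftrightarrow> deletion_set V E \<sigma> n F \<and>
     (\<forall>F'. deletion_set V E \<sigma> n F' \<longrightarrow> card F \<le> card F')"

definition optimal_edit_set :: "'a set \<Rightarrow> 'a set set \<Rightarrow> ('a \<Rightarrow> 'c) \<Rightarrow> nat \<Rightarrow> 'a set set \<Rightarrow> bool" where
  "optimal_edit_set V E \<sigma> n F \<longleftrightarrow> edit_set V E \<sigma> n F \<and>
     (\<forall>F'. edit_set V E \<sigma> n F' \<longrightarrow> card F \<le> card F')"

end

theory Submission
  imports Defs
begin

(* A hub vertex x has a color of its own, so in a tree explaining an RBMG the leaf x can be
   pruned and regrafted as a child of the root, suppressing its former parent if that is left
   with a single child. Last common ancestors of the other leaves do not change, while x becomes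
   a reciprocal best match of every other leaf. Hence adding all pairs xv to an n-RBMG gives an
   n-RBMG again; as these pairs are edges of G, removing them from a deletion or edit set F
   yields a strictly smaller deletion or edit set. *)

lemma finite_chain_has_least:
  assumes "finite S" "S \<noteq> {}"
    and "\<forall>u\<in>S. \<forall>w\<in>S. R u w \<or> R w u"
    and "\<forall>u\<in>S. \<forall>v\<in>S. \<forall>w\<in>S. R u v \<and> R v w \<longrightarrow> R u w"
  shows "\<exists>z\<in>S. \<forall>w\<in>S. R z w"
  using assms
proof (induction S rule: finite_ne_induct)
  case (singleton z)
  then show ?case by blast
next
  case (insert a S)
  then obtain z where z: "z \<in> S" "\<forall>w\<in>S. R z w" by blast
  have "R a z \<or> R z a" using insert.prems z(1) by blast
  then show ?case
  proof
    assume "R a z"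
    then have "\<forall>w\<in>S. R a w" using insert.prems z by blast
    then show ?thesis using insert.prems by blast
  next
    assume "R z a"
    then show ?thesis using z by blast
  qed
qed

lemma ex_distinct_if_card_ge_2: "2 \<le> card A \<Longrightarrow> \<exists>a\<in>A. \<exists>b\<in>A. a \<noteq> b"
  using card_le_Suc0_iff_eq[of A] card.infinite[of A] by (cases "finite A") auto

locale rtree =
  fixes W :: "'b set" and le :: "'b \<Rightarrow> 'b \<Rightarrow> bool"
  assumes rooted: "rooted_tree W le"
begin

abbreviation root where "root \<equiv> tree_root W le"
abbreviation children where "children \<equiv> tree_children W le"

lemma finite_W: "finite W"
  using rooted unfolding rooted_tree_def by (elim conjE)

lemma le_in_W: "le u v \<Longrightarrow> u \<in> W \<and> v \<in> W"
  using rooted unfolding rooted_tree_def by (elim conjE) blast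

lemma le_refl: "u \<in> W \<Longrightarrow> le u u"
  using rooted unfolding rooted_tree_def by (elim conjE) blast

lemma le_antisym: "le u v \<Longrightarrow> le v u \<Longrightarrow> u = v"
  using rooted le_in_W[of u v] unfolding rooted_tree_def by (elim conjE) blast

lemma le_trans: "le u v \<Longrightarrow> le v w \<Longrightarrow> le u w"
  using rooted le_in_W[of u v] le_in_W[of v w] unfolding rooted_tree_def by (elim conjE) blast

lemma ancestors_chain: "le u v \<Longrightarrow> le u w \<Longrightarrow> le v w \<or> le w v"
  using rooted le_in_W[of u v] le_in_W[of u w] unfolding rooted_tree_def by (elim conjE) blast

lemma root_greatest: "root \<in> W \<and> (\<forall>u\<in>W. le u root)"
proof -
  obtain r where r: "r \<in> W" "\<forall>u\<in>W. le u r"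
    using rooted unfolding rooted_tree_def by (elim conjE) blast
  have "root = r"
    unfolding tree_root_def by (rule the_equality) (use r le_antisym in blast)+
  with r show ?thesis by blast
qed

lemma root_eqI: "r \<in> W \<Longrightarrow> \<forall>u\<in>W. le u r \<Longrightarrow> root = r"
  using root_greatest le_antisym by blast

lemma finite_ancestors: "finite {w. le a w}"
  by (rule finite_subset[OF _ finite_W]) (use le_in_W in blast)

lemma ex_least_ancestor:
  assumes "S \<subseteq> {w. le a w}" "S \<noteq> {}"
  shows "\<exists>z\<in>S. \<forall>w\<in>S. le z w"
proof (rule finite_chain_has_least)
  show "finite S" using assms(1) finite_ancestors by (rule finite_subset)
  show "\<forall>u\<in>S. \<forall>w\<in>S. le u w \<or> le w u" using assms(1) ancestors_chain by blast
  show "\<forall>u\<in>S. \<forall>v\<in>S. \<forall>w\<in>S. le u v \<and> le v w \<longrightarrow> le u w" using le_trans by blast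
qed (fact assms(2))

lemma ex_greatest_ancestor:
  assumes "S \<subseteq> {w. le a w}" "S \<noteq> {}"
  shows "\<exists>z\<in>S. \<forall>w\<in>S. le w z"
proof (rule finite_chain_has_least[where R = "\<lambda>u w. le w u"])
  show "finite S" using assms(1) finite_ancestors by (rule finite_subset)
  show "\<forall>u\<in>S. \<forall>w\<in>S. le w u \<or> le u w" using assms(1) ancestors_chain by blast
  show "\<forall>u\<in>S. \<forall>v\<in>S. \<forall>w\<in>S. le v u \<and> le w v \<longrightarrow> le w u" using le_trans by blast
qed (fact assms(2))

lemma finite_children: "finite (children v)"
  using finite_W unfolding tree_children_def by auto

lemma children_in_W: "c \<in> children v \<Longrightarrow> c \<in> W \<and> le c v \<and> c \<noteq> v"
  unfolding tree_children_def by auto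

lemma ex_child_above:
  assumes "le a v" "a \<noteq> v"
  shows "\<exists>c \<in> children v. le a c"
proof -
  let ?S = "{w. le a w \<and> le w v \<and> w \<noteq> v}"
  have "a \<in> ?S" using assms le_in_W le_refl by blast
  then obtain z where z: "z \<in> ?S" "\<forall>w\<in>?S. le w z"
    using ex_greatest_ancestor[of ?S a] by blast
  have "w = z \<or> w = v" if "le z w" "le w v" for w
  proof (cases "w = v")
    case False
    with that z have "le w z" using le_trans by blast
    with that show ?thesis using le_antisym by blast
  qed simp
  then have "z \<in> children v"
    unfolding tree_children_def using z le_in_W by blast
  with z show ?thesis by blast
qed

lemma ex_parent:
  assumes "u \<in> W" "u \<noteq> root"
  shows "\<exists>p. u \<in> children p"
proof -
  let ?S = "{w. le u w \<and> w \<noteq> u}"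
  have "root \<in> ?S" using assms root_greatest by blast
  then obtain p where p: "p \<in> ?S" "\<forall>w\<in>?S. le p w"
    using ex_least_ancestor[of ?S u] by blast
  have "w = u \<or> w = p" if "le u w" "le w p" for w
    using that p le_antisym by blast
  then have "u \<in> children p"
    unfolding tree_children_def using assms p le_in_W by blast
  then show ?thesis by blast
qed

lemma parent_unique:
  assumes "u \<in> children p" "u \<in> children q"
  shows "p = q"
proof -
  have up: "le u p" "u \<noteq> p" "\<forall>w\<in>W. le u w \<and> le w p \<longrightarrow> w = u \<or> w = p"
    and uq: "le u q" "u \<noteq> q" "\<forall>w\<in>W. le u w \<and> le w q \<longrightarrow> w = u \<or> w = q"
    using assms unfolding tree_children_def by auto
  from up(1) uq(1) have "le p q \<or> le q p" by (rule ancestors_chain)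
  then show ?thesis
    using up uq le_in_W by blast
qed

definition parent :: "'b \<Rightarrow> 'b" where
  "parent u = (THE p. u \<in> children p)"

lemma parent: "u \<in> W \<Longrightarrow> u \<noteq> root \<Longrightarrow> u \<in> children (parent u)"
  unfolding parent_def using ex_parent parent_unique by (metis theI)

lemma lca_eqI:
  assumes "z \<in> W" "le a z" "le b z" "\<forall>w\<in>W. le a w \<and> le b w \<longrightarrow> le z w"
  shows "lca W le a b = z"
  unfolding lca_def by (rule the_equality) (use assms le_antisym in blast)+

lemma lca:
  assumes "a \<in> W" "b \<in> W"
  shows "lca W le a b \<in> W \<and> le a (lca W le a b) \<and> le b (lca W le a b) \<and>
    (\<forall>w\<in>W. le a w \<and> le b w \<longrightarrow> le (lca W le a b) w)"
proof -
  let ?S = "{w. le a w \<and> le b w}"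
  have "root \<in> ?S" using assms root_greatest by blast
  then obtain z where z: "z \<in> ?S" "\<forall>w\<in>?S. le z w"
    using ex_least_ancestor[of ?S a] by blast
  have "lca W le a b = z" by (rule lca_eqI) (use z le_in_W in auto)
  with z le_in_W show ?thesis by auto
qed

lemma child_covered: "c \<in> children u \<Longrightarrow> le c w \<Longrightarrow> le w u \<Longrightarrow> w = c \<or> w = u"
  unfolding tree_children_def using le_in_W by blast

lemma le_above_child: "c \<in> children p \<Longrightarrow> le c u \<Longrightarrow> u \<noteq> c \<Longrightarrow> le p u"
  using ancestors_chain[of c p u] child_covered[of c p u] children_in_W le_refl le_in_W by blast

lemma lca_below_distinct_children:
  assumes d1: "d1 \<in> children u" and d2: "d2 \<in> children u" and "d1 \<noteq> d2"
    and a: "le a1 d1" "le a2 d2"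
  shows "lca W le a1 a2 = u"
proof (rule lca_eqI)
  show "u \<in> W" using d1 children_in_W le_in_W by blast
  show "le a1 u" using le_trans[OF a(1)] children_in_W[OF d1] by blast
  show "le a2 u" using le_trans[OF a(2)] children_in_W[OF d2] by blast
  show "\<forall>w\<in>W. le a1 w \<and> le a2 w \<longrightarrow> le u w"
  proof (intro ballI impI)
    fix w assume w: "w \<in> W" "le a1 w \<and> le a2 w"
    have below_child: "le w d" if "d \<in> children u" "le a d" "le a w" "le a u" "\<not> le u w" for d a
    proof -
      have "le w u" using ancestors_chain[OF that(3,4)] that(5) by blast
      moreover have "le w d \<or> le d w" using ancestors_chain[OF that(3,2)] by blast
      ultimately show "le w d"
        using child_covered[OF that(1), of w] that(5) w(1) le_refl[of w] by blast
    qed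
    show "le u w"
    proof (rule ccontr)
      assume "\<not> le u w"
      then have "le w d1" "le w d2"
        using below_child[OF d1 a(1)] below_child[OF d2 a(2)] w \<open>le a1 u\<close> \<open>le a2 u\<close> by blast+
      then have "le d1 d2 \<or> le d2 d1" by (rule ancestors_chain)
      then show False
        using child_covered[OF d1, of d2] child_covered[OF d2, of d1] \<open>d1 \<noteq> d2\<close>
          children_in_W[OF d1] children_in_W[OF d2] by blast
    qed
  qed
qed

lemma two_children_if_lca:
  assumes "a \<in> W" "b \<in> W" "lca W le a b = u" "a \<noteq> u" "b \<noteq> u"
  shows "2 \<le> card (children u)"
proof -
  have ab: "le a u" "le b u" "\<forall>w\<in>W. le a w \<and> le b w \<longrightarrow> le u w"
    using lca[of a b] assms by auto
  obtain c1 where c1: "c1 \<in> children u" "le a c1" using ex_child_above ab assms by blast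
  obtain c2 where c2: "c2 \<in> children u" "le b c2" using ex_child_above ab assms by blast
  have "c1 \<noteq> c2"
  proof
    assume "c1 = c2"
    then have "le u c1" using ab(3) c1 c2 children_in_W by blast
    then show False using children_in_W[OF c1(1)] le_antisym by blast
  qed
  then have "card {c1, c2} \<le> card (children u)"
    using c1 c2 finite_children by (intro card_mono) auto
  with \<open>c1 \<noteq> c2\<close> show ?thesis by simp
qed

end

definition star_edges :: "'a \<Rightarrow> 'a set \<Rightarrow> 'a set set" where
  "star_edges x V = {{x, w} | w. w \<in> V \<and> w \<noteq> x}"

locale leaf_regraft = rtree +
  fixes L :: "'a set" and X :: 'a
  assumes phylo: "phylo_tree L W le"
    and X_leaf: "X \<in> L"
    and other_leaf: "\<exists>v\<in>L. v \<noteq> X"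
begin

abbreviation p where "p \<equiv> parent X"

lemma leaf_minimal: "l \<in> L \<Longrightarrow> l \<in> W \<and> (\<forall>w. le w l \<longrightarrow> w = l)"
  using phylo le_in_W unfolding phylo_tree_def tree_leaves_def by blast

lemma inner_degree: "u \<in> W \<Longrightarrow> u \<notin> L \<Longrightarrow> u \<noteq> root \<Longrightarrow> 2 \<le> card (children u)"
  using phylo unfolding phylo_tree_def by blast

lemma leaves_eq: "tree_leaves W le = L"
  using phylo unfolding phylo_tree_def by blast

lemma le_X: "le w X \<Longrightarrow> w = X"
  using leaf_minimal[OF X_leaf] by blast

lemma root_not_leaf: "root \<notin> L"
proof
  assume "root \<in> L"
  obtain v where v: "v \<in> L" "v \<noteq> X" using other_leaf by blast
  have "X = root" "v = root"
    using leaf_minimal \<open>root \<in> L\<close> X_leaf v(1) root_greatest by blast+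
  with v(2) show False by simp
qed

lemma X_child: "X \<in> children p"
  using parent leaf_minimal[OF X_leaf] root_not_leaf X_leaf by metis

lemma p_not_leaf: "p \<notin> L"
  using X_child leaf_minimal children_in_W by blast

lemma ex_sibling: "\<exists>s. s \<in> children p \<and> s \<noteq> X"
proof (cases "p = root")
  case True
  obtain v where v: "v \<in> L" "v \<noteq> X" using other_leaf by blast
  have "v \<noteq> root" using v(1) root_not_leaf by blast
  moreover have "le v root" using v(1) leaf_minimal root_greatest by blast
  ultimately obtain c where "c \<in> children root" "le v c" using ex_child_above by blast
  moreover have "c \<noteq> X" using le_X \<open>le v c\<close> v(2) by blast
  ultimately show ?thesis unfolding True by blast
next
  case False
  then have "2 \<le> card (children p)"
    using inner_degree p_not_leaf X_child children_in_W le_in_W by blast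
  then show ?thesis using ex_distinct_if_card_ge_2 by blast
qed

text \<open>Moving X away leaves its parent with a single child exactly in this case; it is
  then suppressed.\<close>
definition suppress :: bool where
  "suppress \<longleftrightarrow> p \<noteq> root \<and> card (children p) = 2"

lemma suppressed_children:
  "suppress \<Longrightarrow> s \<in> children p \<Longrightarrow> s \<noteq> X \<Longrightarrow> children p = {X, s}"
  unfolding suppress_def using X_child by (metis card_2_iff doubleton_eq_iff insertE singletonD)

definition W' :: "'a set" where
  "W' = (if suppress then W - {p} else W)"

definition le' :: "'a \<Rightarrow> 'a \<Rightarrow> bool" where
  "le' u w \<longleftrightarrow> u \<in> W' \<and> w \<in> W' \<and> (if u = X then w = X \<or> w = root else le u w)"

lemma in_W': "u \<in> W' \<longleftrightarrow> u \<in> W \<and> \<not> (suppress \<and> u = p)"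
  unfolding W'_def by auto

lemma root_in_W': "root \<in> W'"
  unfolding W'_def suppress_def using root_greatest by auto

lemma leaves_in_W': "L \<subseteq> W'"
  unfolding W'_def using leaf_minimal p_not_leaf by auto

lemma X_ne_root: "X \<noteq> root"
  using X_leaf root_not_leaf by blast

lemma le'_X: "le' X w \<longleftrightarrow> w = X \<or> w = root"
  unfolding le'_def using leaves_in_W' X_leaf root_in_W' by auto

lemma le'_other: "u \<noteq> X \<Longrightarrow> le' u w \<longleftrightarrow> u \<in> W' \<and> w \<in> W' \<and> le u w"
  unfolding le'_def by auto

lemma le'_root: "u \<in> W' \<Longrightarrow> le' u root"
  using le'_X le'_other root_in_W' root_greatest in_W' by (cases "u = X") blast+

lemma rooted': "rooted_tree W' le'"
  unfolding rooted_tree_def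
proof (intro conjI)
  show "finite W'" unfolding W'_def using finite_W by simp
  show "\<forall>u\<in>W'. le' u u" unfolding le'_def using in_W' le_refl by auto
  show "\<forall>u v. le' u v \<longrightarrow> u \<in> W' \<and> v \<in> W'" unfolding le'_def by blast
  show "\<exists>r\<in>W'. \<forall>u\<in>W'. le' u r" using root_in_W' le'_root by blast
  show "\<forall>u\<in>W'. \<forall>v\<in>W'. le' u v \<and> le' v u \<longrightarrow> u = v"
  proof (intro ballI impI)
    fix u v assume "le' u v \<and> le' v u"
    then show "u = v"
      using le'_X le'_other le_antisym le_X X_ne_root by metis
  qed
  show "\<forall>u\<in>W'. \<forall>v\<in>W'. \<forall>w\<in>W'. le' u v \<and> le' v w \<longrightarrow> le' u w"
  proof (intro ballI impI)
    fix u v w assume w: "w \<in> W'" and uvw: "le' u v \<and> le' v w"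
    show "le' u w"
    proof (cases "u = X")
      case True
      then have "v = X \<or> v = root" using uvw le'_X by blast
      moreover have "v = root \<Longrightarrow> w = root"
        using uvw le'_other X_ne_root root_greatest le_antisym le_in_W by metis
      ultimately show ?thesis using uvw True le'_X by metis
    next
      case False
      then have "le u v" "v \<noteq> X" using uvw le'_other le_X by blast+
      then show ?thesis using uvw le'_other False le_trans by metis
    qed
  qed
  show "\<forall>u\<in>W'. \<forall>v\<in>W'. \<forall>w\<in>W'. le' u v \<and> le' u w \<longrightarrow> le' v w \<or> le' w v"
  proof (intro ballI impI)
    fix u v w assume vw: "v \<in> W'" "w \<in> W'" and uvw: "le' u v \<and> le' u w"
    show "le' v w \<or> le' w v"
    proof (cases "u = X")
      case True
      then show ?thesis using uvw le'_X le'_root vw by metis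
    next
      case False
      then have "le u v" "le u w" "v \<noteq> X" "w \<noteq> X" using uvw le'_other le_X by blast+
      then show ?thesis using ancestors_chain le'_other vw by blast
    qed
  qed
qed

sublocale regrafted: rtree W' le'
  by unfold_locales (rule rooted')

lemma root': "tree_root W' le' = root"
  using regrafted.root_eqI root_in_W' le'_root by blast

lemma sibling_in_W': "s \<in> children p \<Longrightarrow> s \<noteq> X \<Longrightarrow> s \<in> W'"
  using in_W' children_in_W by blast

lemma below_p_le_sibling:
  assumes "suppress" "s \<in> children p" "s \<noteq> X" "le a p" "a \<noteq> p" "a \<noteq> X"
  shows "le a s"
proof -
  obtain d where "d \<in> children p" "le a d" using ex_child_above assms(4,5) by blast
  moreover have "d \<noteq> X" using le_X \<open>le a d\<close> assms(6) by blast
  ultimately show ?thesis using suppressed_children[OF assms(1-3)] by blast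
qed

lemma leaves': "tree_leaves W' le' = L"
proof
  show "L \<subseteq> tree_leaves W' le'"
  proof
    fix l assume l: "l \<in> L"
    have "w = l" if "le' w l" for w
    proof (cases "w = X")
      case True
      then show ?thesis using that le'_X l root_not_leaf by auto
    next
      case False
      then show ?thesis using that le'_other leaf_minimal l by blast
    qed
    then show "l \<in> tree_leaves W' le'"
      unfolding tree_leaves_def using l leaves_in_W' by blast
  qed
next
  show "tree_leaves W' le' \<subseteq> L"
  proof
    fix u assume "u \<in> tree_leaves W' le'"
    then have u: "u \<in> W'" "\<forall>w\<in>W'. le' w u \<longrightarrow> w = u" unfolding tree_leaves_def by auto
    show "u \<in> L"
    proof (rule ccontr)
      assume "u \<notin> L"
      then obtain w where w: "le w u" "w \<noteq> u"
        using u(1) in_W' leaves_eq unfolding tree_leaves_def by blast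
      show False
      proof (cases "w \<in> W' \<and> w \<noteq> X")
        case True
        then show False using u w le'_other by blast
      next
        case False
        then have "w = X \<or> w = p" using in_W' w le_in_W by blast
        then have "le p u"
          using le_above_child[OF X_child] w le_trans X_leaf \<open>u \<notin> L\<close> by blast
        obtain s where s: "s \<in> children p" "s \<noteq> X" using ex_sibling by blast
        have "le s u" using le_trans[OF _ \<open>le p u\<close>] s children_in_W by blast
        moreover have "s \<noteq> u" using \<open>le p u\<close> s children_in_W le_antisym by blast
        ultimately show False using u sibling_in_W'[OF s] le'_other s(2) by blast
      qed
    qed
  qed
qed

lemma lca_regraft:
  assumes a: "a \<in> W'" "a \<noteq> X" and b: "b \<in> W'" "b \<noteq> X"
  shows "lca W' le' a b = lca W le a b"
proof -
  define z where "z = lca W le a b"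
  have ab: "a \<in> W" "b \<in> W" using a b in_W' by auto
  have z: "z \<in> W" "le a z" "le b z" "\<forall>w\<in>W. le a w \<and> le b w \<longrightarrow> le z w"
    using lca[OF ab] unfolding z_def by blast+
  have "z \<noteq> X" using z(2) le_X a(2) by blast
  have "z \<in> W'"
  proof (rule ccontr)
    assume "z \<notin> W'"
    then have "suppress" "z = p" using in_W' z(1) by auto
    obtain s where s: "s \<in> children p" "s \<noteq> X" using ex_sibling by blast
    have "a \<noteq> p" "b \<noteq> p" using a b in_W' \<open>suppress\<close> by auto
    then have "le a s" "le b s"
      using below_p_le_sibling[OF \<open>suppress\<close> s] z(2,3) \<open>z = p\<close> a(2) b(2) by auto
    then have "le p s" using z(4) \<open>z = p\<close> children_in_W[OF s(1)] by blast
    then show False using children_in_W[OF s(1)] le_antisym by blast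
  qed
  have "lca W' le' a b = z"
  proof (rule regrafted.lca_eqI)
    show "z \<in> W'" "le' a z" "le' b z" using \<open>z \<in> W'\<close> z a b le'_other by blast+
    show "\<forall>w\<in>W'. le' a w \<and> le' b w \<longrightarrow> le' z w"
    proof (intro ballI impI)
      fix w assume w: "w \<in> W'" "le' a w \<and> le' b w"
      then have "le a w" "le b w" "w \<in> W" using le'_other a(2) b(2) in_W' by auto
      then have "le z w" using z(4) by blast
      then show "le' z w" using le'_other \<open>z \<noteq> X\<close> \<open>z \<in> W'\<close> w(1) by blast
    qed
  qed
  then show ?thesis unfolding z_def .
qed

lemma lca_regraft_X:
  assumes "a \<in> W'" "a \<noteq> X"
  shows "lca W' le' a X = root" "lca W' le' X a = root"
proof -
  have "le' a root" "le' X root" using assms le'_root le'_X by blast+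
  moreover have "\<forall>w\<in>W'. le' a w \<and> le' X w \<longrightarrow> le' root w"
    using le'_X le'_other le_X assms le'_root root_in_W' by metis
  ultimately show "lca W' le' a X = root" "lca W' le' X a = root"
    using regrafted.lca_eqI root_in_W' by blast+
qed

lemma lca_regraft_ne_X:
  assumes "a \<in> W'" "a \<noteq> X" "b \<in> W'"
  shows "lca W' le' a b \<in> W'" "lca W' le' a b \<noteq> X"
proof -
  have "lca W' le' a b \<in> W'" "le' a (lca W' le' a b)"
    using regrafted.lca[OF assms(1,3)] by simp_all
  then show "lca W' le' a b \<in> W'" "lca W' le' a b \<noteq> X"
    using le'_other[OF assms(2)] le_X assms(2) by auto
qed

lemma card_children_Diff_X:
  assumes u: "u \<in> W" "u \<notin> L" "u \<noteq> root" "u \<in> W'"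
  shows "2 \<le> card (children u - {X})"
proof -
  have two: "2 \<le> card (children u)" using inner_degree u by blast
  show ?thesis
  proof (cases "u = p")
    case True
    then have "\<not> suppress" using u(4) in_W' by blast
    then have "3 \<le> card (children u)" using two True u(3) unfolding suppress_def by auto
    then show ?thesis using card_Diff_singleton[OF X_child] True by simp
  next
    case False
    then have "X \<notin> children u" using parent_unique X_child by blast
    then show ?thesis using two by simp
  qed
qed

lemma regrafted_inner_degree:
  assumes "u \<in> W' - L" "u \<noteq> root"
  shows "2 \<le> card (regrafted.children u)"
proof -
  have u: "u \<in> W" "u \<notin> L" "u \<noteq> root" "u \<in> W'" using assms in_W' by auto
  then have "2 \<le> card (children u - {X})" by (rule card_children_Diff_X)
  then obtain d1 d2 where d: "d1 \<in> children u - {X}" "d2 \<in> children u - {X}" "d1 \<noteq> d2"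
    using ex_distinct_if_card_ge_2 by blast
  have rep: "\<exists>a. a \<in> W' \<and> a \<noteq> X \<and> le a d" if d: "d \<in> children u - {X}" for d
  proof (cases "d \<in> W'")
    case True
    then show ?thesis using d children_in_W le_refl by blast
  next
    case False
    then have "d = p" using d in_W' children_in_W by blast
    obtain s where s: "s \<in> children p" "s \<noteq> X" using ex_sibling by blast
    then have "s \<in> W'" "le s p" using sibling_in_W' children_in_W by blast+
    then show ?thesis using s(2) \<open>d = p\<close> by blast
  qed
  obtain a1 where a1: "a1 \<in> W'" "a1 \<noteq> X" "le a1 d1" using rep d(1) by blast
  obtain a2 where a2: "a2 \<in> W'" "a2 \<noteq> X" "le a2 d2" using rep d(2) by blast
  have below_ne: "a \<noteq> u" if "le a d" "d \<in> children u" for a d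
    using that children_in_W[of d u] le_antisym[of d u] by blast
  have "lca W le a1 a2 = u"
    using lca_below_distinct_children[of d1 u d2 a1 a2] d a1(3) a2(3) by blast
  then have "lca W' le' a1 a2 = u" using lca_regraft a1 a2 by simp
  moreover have "a1 \<noteq> u" "a2 \<noteq> u" using below_ne a1(3) a2(3) d by blast+
  ultimately show ?thesis using regrafted.two_children_if_lca a1(1) a2(1) by blast
qed

lemma phylo': "phylo_tree L W' le'"
  unfolding phylo_tree_def root' using rooted' leaves' regrafted_inner_degree by simp

context
  fixes \<sigma> :: "'a \<Rightarrow> 'c"
  assumes X_color_unique: "\<forall>a\<in>L. a \<noteq> X \<longrightarrow> \<sigma> a \<noteq> \<sigma> X"
begin

lemma best_match_regraft:
  assumes ab: "a \<in> L" "b \<in> L" "a \<noteq> X" "b \<noteq> X"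
  shows "best_match L W' le' \<sigma> a b \<longleftrightarrow> best_match L W le \<sigma> a b"
proof -
  have "le' (lca W' le' a b) (lca W' le' a b') \<longleftrightarrow> le (lca W le a b) (lca W le a b')"
    if b': "b' \<in> L" "\<sigma> b' = \<sigma> b" for b'
  proof -
    have "b' \<noteq> X" using b' X_color_unique ab by metis
    have W': "a \<in> W'" "b \<in> W'" "b' \<in> W'" using ab b' leaves_in_W' by blast+
    show ?thesis
      using lca_regraft[OF W'(1) ab(3) W'(2) ab(4)] lca_regraft[OF W'(1) ab(3) W'(3) \<open>b' \<noteq> X\<close>]
        lca_regraft_ne_X[OF W'(1) ab(3) W'(2)] lca_regraft_ne_X[OF W'(1) ab(3) W'(3)]
        le'_other by simp
  qed
  then show ?thesis unfolding best_match_def by auto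
qed

lemma best_match_regraft_X:
  assumes a: "a \<in> L" "a \<noteq> X"
  shows "best_match L W' le' \<sigma> a X" "best_match L W' le' \<sigma> X a"
proof -
  have aW': "a \<in> W'" using a leaves_in_W' by blast
  have col: "\<sigma> a \<noteq> \<sigma> X" using X_color_unique a by blast
  have root_root: "le' root root" using le'_root[OF root_in_W'] .
  have "le' (lca W' le' a X) (lca W' le' a b)" if "b \<in> L" "\<sigma> b = \<sigma> X" for b
  proof -
    have "b = X" using that X_color_unique by blast
    then show ?thesis using lca_regraft_X(1)[OF aW' a(2)] root_root by simp
  qed
  then show "best_match L W' le' \<sigma> a X"
    unfolding best_match_def using a(1) X_leaf col by blast
  have "le' (lca W' le' X a) (lca W' le' X b)" if "b \<in> L" "\<sigma> b = \<sigma> a" for b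
  proof -
    have "b \<noteq> X" "b \<in> W'" using that col leaves_in_W' by auto
    then show ?thesis using lca_regraft_X(2) aW' a(2) root_root by simp
  qed
  then show "best_match L W' le' \<sigma> X a"
    unfolding best_match_def using a(1) X_leaf col by auto
qed

lemma rbm_edges_regraft:
  "rbm_edges L W' le' \<sigma> = rbm_edges L W le \<sigma> \<union> star_edges X L"
proof (intro equalityI subsetI)
  fix e assume "e \<in> rbm_edges L W' le' \<sigma>"
  then obtain a b where e: "e = {a, b}" "best_match L W' le' \<sigma> a b" "best_match L W' le' \<sigma> b a"
    unfolding rbm_edges_def by blast
  then have ab: "a \<in> L" "b \<in> L" "a \<noteq> b" unfolding best_match_def by auto
  show "e \<in> rbm_edges L W le \<sigma> \<union> star_edges X L"
  proof (cases "a = X \<or> b = X")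
    case True
    then show ?thesis using e(1) ab unfolding star_edges_def by blast
  next
    case False
    then show ?thesis using e ab best_match_regraft unfolding rbm_edges_def by blast
  qed
next
  fix e assume e: "e \<in> rbm_edges L W le \<sigma> \<union> star_edges X L"
  show "e \<in> rbm_edges L W' le' \<sigma>"
  proof (cases "e \<in> star_edges X L")
    case True
    then obtain a where "e = {X, a}" "a \<in> L" "a \<noteq> X" unfolding star_edges_def by blast
    then show ?thesis using best_match_regraft_X unfolding rbm_edges_def by blast
  next
    case False
    then obtain a b where ab: "e = {a, b}" "best_match L W le \<sigma> a b" "best_match L W le \<sigma> b a"
      using e unfolding rbm_edges_def by blast
    then have "a \<in> L" "b \<in> L" "a \<noteq> b" unfolding best_match_def by auto
    then have "a \<noteq> X" "b \<noteq> X" using False ab(1) unfolding star_edges_def by blast+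
    then show ?thesis
      using ab best_match_regraft \<open>a \<in> L\<close> \<open>b \<in> L\<close> unfolding rbm_edges_def by blast
  qed
qed

end

end

lemma ex_phylo_tree_rbm_edges_add_star:
  assumes phylo: "phylo_tree L W le" and "X \<in> L" "\<exists>v\<in>L. v \<noteq> X"
    and "\<forall>a\<in>L. a \<noteq> X \<longrightarrow> \<sigma> a \<noteq> \<sigma> X"
  shows "\<exists>W' le'. phylo_tree L W' le' \<and>
    rbm_edges L W' le' \<sigma> = rbm_edges L W le \<sigma> \<union> star_edges X L"
proof -
  interpret leaf_regraft W le L X
    using assms by unfold_locales (auto simp: phylo_tree_def)
  show ?thesis using phylo' rbm_edges_regraft[OF assms(4)] by blast
qed

lemma star_edges_image:
  assumes "inj f"
  shows "(\<lambda>e. f ` e) ` star_edges x V = star_edges (f x) (f ` V)"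
proof (intro equalityI subsetI)
  fix e assume "e \<in> star_edges (f x) (f ` V)"
  then obtain w where "e = {f x, f w}" "w \<in> V" "w \<noteq> x"
    unfolding star_edges_def by auto
  then show "e \<in> (\<lambda>e. f ` e) ` star_edges x V"
    unfolding star_edges_def by (intro rev_image_eqI[of "{x, w}"]) auto
qed (use assms in \<open>auto simp: star_edges_def inj_eq\<close>)

lemma is_RBMG_add_star:
  assumes rbmg: "is_RBMG V H \<sigma>" and "x \<in> V" "\<exists>v\<in>V. v \<noteq> x"
    and col: "\<forall>w\<in>V. w \<noteq> x \<longrightarrow> \<sigma> w \<noteq> \<sigma> x"
  shows "is_RBMG V (H \<union> star_edges x V) \<sigma>"
proof -
  obtain W :: "('a + nat) set" and le where
    phylo: "phylo_tree (Inl ` V) W le" and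
    rbm: "rbm_edges (Inl ` V) W le (\<sigma> \<circ> projl) = (\<lambda>e. Inl ` e) ` H"
    using rbmg unfolding is_RBMG_def by blast
  have "Inl x \<in> (Inl ` V :: ('a + nat) set)" "\<exists>v\<in>Inl ` V. v \<noteq> (Inl x :: 'a + nat)"
    using assms(2,3) by auto
  moreover have "\<forall>a\<in>Inl ` V. a \<noteq> Inl x \<longrightarrow> (\<sigma> \<circ> projl) a \<noteq> (\<sigma> \<circ> projl) (Inl x)"
    using col by auto
  ultimately obtain W' :: "('a + nat) set" and le' where "phylo_tree (Inl ` V) W' le'" and
    "rbm_edges (Inl ` V) W' le' (\<sigma> \<circ> projl) = (\<lambda>e. Inl ` e) ` H \<union> star_edges (Inl x) (Inl ` V)"
    using ex_phylo_tree_rbm_edges_add_star[OF phylo, of "Inl x" "\<sigma> \<circ> projl"] rbm by auto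
  moreover have "star_edges (Inl x) (Inl ` V) = ((\<lambda>e. Inl ` e) ` star_edges x V :: ('a + nat) set set)"
    by (rule star_edges_image[symmetric]) simp
  moreover have "simple_graph V (H \<union> star_edges x V)"
    using rbmg assms(2) unfolding is_RBMG_def simple_graph_def star_edges_def all_pairs_def by blast
  moreover have "properly_colored V (H \<union> star_edges x V) \<sigma>"
    using rbmg col unfolding is_RBMG_def properly_colored_def star_edges_def
    by (auto simp: doubleton_eq_iff)
  ultimately show ?thesis unfolding is_RBMG_def image_Un by auto
qed

lemma is_n_RBMG_add_star:
  assumes "is_n_RBMG V H \<sigma> n" "x \<in> V" "\<exists>v\<in>V. v \<noteq> x"
    "\<forall>w\<in>V. w \<noteq> x \<longrightarrow> \<sigma> w \<noteq> \<sigma> x"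
  shows "is_n_RBMG V (H \<union> star_edges x V) \<sigma> n"
  using assms is_RBMG_add_star[OF _ assms(2-4)] unfolding is_n_RBMG_def by blast

lemma finite_all_pairs: "finite V \<Longrightarrow> finite (all_pairs V)"
  by (rule finite_subset[of _ "Pow V"]) (auto simp: all_pairs_def)

lemma all_pairs_doubletonD: "{x, v} \<in> all_pairs V \<Longrightarrow> v \<in> V \<and> v \<noteq> x"
  unfolding all_pairs_def by (auto simp: doubleton_eq_iff)

lemma hub_star_edges_subset: "hub_vertex V E x \<Longrightarrow> star_edges x V \<subseteq> E"
  unfolding hub_vertex_def star_edges_def by blast

lemma hub_color_unique:
  "properly_colored V E \<sigma> \<Longrightarrow> hub_vertex V E x \<Longrightarrow> \<forall>w\<in>V. w \<noteq> x \<longrightarrow> \<sigma> w \<noteq> \<sigma> x"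
  unfolding properly_colored_def hub_vertex_def by (metis DiffI singletonD)

theorem mainTheorem5:
  fixes V :: "'a set" and E F :: "'a set set" and \<sigma> :: "'a \<Rightarrow> 'c" and n :: nat and x :: 'a
  assumes "properly_n_colored V E \<sigma> n"
    and "hub_vertex V E x"
  shows "(optimal_deletion_set V E \<sigma> n F \<longrightarrow> (\<forall>v \<in> V. {x, v} \<notin> F)) \<and>
         (optimal_edit_set V E \<sigma> n F \<longrightarrow> (\<forall>v \<in> V. {x, v} \<notin> F))"
proof -
  let ?S = "star_edges x V"
  have E: "E \<subseteq> all_pairs V" "finite (all_pairs V)"
    using assms(1) finite_all_pairs unfolding properly_n_colored_def simple_graph_def by auto
  have "?S \<subseteq> E" "x \<in> V"
    using hub_star_edges_subset[OF assms(2)] assms(2) unfolding hub_vertex_def by auto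
  have "properly_colored V E \<sigma>" using assms(1) unfolding properly_n_colored_def by blast
  note col = hub_color_unique[OF this assms(2)]
  have repair: "is_n_RBMG V (H \<union> ?S) \<sigma> n" if "is_n_RBMG V H \<sigma> n" "{x, v} \<in> F" "F \<subseteq> all_pairs V" for H v
  proof -
    have "v \<in> V" "v \<noteq> x" using all_pairs_doubletonD[of x v V] that(2,3) by blast+
    then show ?thesis using is_n_RBMG_add_star[OF that(1) \<open>x \<in> V\<close> _ col] by blast
  qed
  have shrink: "card (F - ?S) < card F" if "{x, v} \<in> F" "F \<subseteq> all_pairs V" for v
  proof (rule psubset_card_mono)
    show "finite F" using that(2) E(2) by (rule finite_subset)
    have "{x, v} \<in> ?S"
      using all_pairs_doubletonD[of x v V] that unfolding star_edges_def by blast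
    then show "F - ?S \<subset> F" using that(1) by blast
  qed
  show ?thesis
  proof (intro conjI impI ballI notI)
    fix v assume opt: "optimal_deletion_set V E \<sigma> n F" and xv: "{x, v} \<in> F"
    then have F: "F \<subseteq> E" "F \<subseteq> all_pairs V" and "is_n_RBMG V (E - F) \<sigma> n"
      using E(1) unfolding optimal_deletion_set_def deletion_set_def by auto
    then have "is_n_RBMG V ((E - F) \<union> ?S) \<sigma> n" using repair xv by blast
    moreover have "E - (F - ?S) = (E - F) \<union> ?S" using \<open>?S \<subseteq> E\<close> by blast
    ultimately have "deletion_set V E \<sigma> n (F - ?S)"
      using F(1) unfolding deletion_set_def by auto
    then have "card F \<le> card (F - ?S)" using opt unfolding optimal_deletion_set_def by blast
    then show False using shrink[OF xv F(2)] by simp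
  next
    fix v assume opt: "optimal_edit_set V E \<sigma> n F" and xv: "{x, v} \<in> F"
    then have F: "F \<subseteq> all_pairs V" and "is_n_RBMG V ((E - F) \<union> (F - E)) \<sigma> n"
      unfolding optimal_edit_set_def edit_set_def by auto
    then have "is_n_RBMG V ((E - F) \<union> (F - E) \<union> ?S) \<sigma> n" using repair xv by blast
    moreover have "(E - (F - ?S)) \<union> ((F - ?S) - E) = (E - F) \<union> (F - E) \<union> ?S"
      using \<open>?S \<subseteq> E\<close> by blast
    ultimately have "edit_set V E \<sigma> n (F - ?S)"
      using F unfolding edit_set_def by auto
    then have "card F \<le> card (F - ?S)" using opt unfolding optimal_edit_set_def by blast
    then show False using shrink[OF xv F] by simp
  qed
qed

end
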